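(* For each $i\in\{b,1,2\}$, the function $V_{B_i}(p_1,p_2)$ is convex in $p_1$ (for each fixed $p_2\in[0,1]$) and convex in $p_2$ (for each fixed $p_1\in[0,1]$).
   Context: Fix parameters $0\le\lambda_0\le\lambda_1\le 1$, a discount factor $\beta\in[0,1)$, and rates $0<R_l<R_h<2R_l$. Let $\alpha=\lambda_1-\lambda_0$ and $T(p)=\alpha p+\lambda_0$. The model consists of two independent, identical Gilbert–Elliott channels (state 1 = good, 0 = bad) with $\Pr[\text{good}\mid\text{good}]=\lambda_1$ and $\Pr[\text{good}\mid\text{bad}]=\lambda_0$. The belief state is $(p_1,p_2)\in[0,1]^2$, where $p_i$ is the conditional probability that channel $i$ is good in the current slot. There are three actions, $B_b$, $B_1$ and $B_2$. Let $V:[0,1]^2\to\mathbb R$ be the optimal expected total discounted reward, i.e. the unique bounded function satisfying $V=\max\{V_{B_b},V_{B_1},V_{B_2}\}$, where $V_{B_b}(p_1,p_2)=p_1R_l+p_2R_l+\beta[(1-p_1)(1-p_2)V(\lambda_0,\lambda_0)+p_1(1-p_2)V(\lambda_1,\lambda_0)+(1-p_1)p_2V(\lambda_0,\lambda_1)+p_1p_2V(\lambda_1,\lambda_1)]$, $V_{B_1}(p_1,p_2)=p_1R_h+\beta[(1-p_1)V(\lambda_0,T(p_2))+p_1V(\lambda_1,T(p_2))]$, $V_{B_2}(p_1,p_2)=p_2R_h+\beta[(1-p_2)V(T(p_1),\lambda_0)+p_2V(T(p_1),\lambda_1)]$. *)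

theory Defs
  imports "HOL-Analysis.Analysis"
begin

definition Tupd :: "real \<Rightarrow> real \<Rightarrow> real \<Rightarrow> real" where
  "Tupd l0 l1 p = (l1 - l0) * p + l0"

datatype action = Bb | B1 | B2

fun VB :: "real \<Rightarrow> real \<Rightarrow> real \<Rightarrow> real \<Rightarrow> real \<Rightarrow> (real \<Rightarrow> real \<Rightarrow> real)
           \<Rightarrow> action \<Rightarrow> real \<Rightarrow> real \<Rightarrow> real" where
  "VB l0 l1 \<beta> Rl Rh W Bb p1 p2 =
     p1 * Rl + p2 * Rl + \<beta> * ((1 - p1) * (1 - p2) * W l0 l0 + p1 * (1 - p2) * W l1 l0
        + (1 - p1) * p2 * W l0 l1 + p1 * p2 * W l1 l1)"
| "VB l0 l1 \<beta> Rl Rh W B1 p1 p2 =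
     p1 * Rh + \<beta> * ((1 - p1) * W l0 (Tupd l0 l1 p2) + p1 * W l1 (Tupd l0 l1 p2))"
| "VB l0 l1 \<beta> Rl Rh W B2 p1 p2 =
     p2 * Rh + \<beta> * ((1 - p2) * W (Tupd l0 l1 p1) l0 + p2 * W (Tupd l0 l1 p1) l1)"

definition is_optimal_value :: "real \<Rightarrow> real \<Rightarrow> real \<Rightarrow> real \<Rightarrow> real \<Rightarrow> (real \<Rightarrow> real \<Rightarrow> real) \<Rightarrow> bool" where
  "is_optimal_value l0 l1 \<beta> Rl Rh V \<longleftrightarrow>
     (\<exists>M. \<forall>p1\<in>{0..1}. \<forall>p2\<in>{0..1}. \<bar>V p1 p2\<bar> \<le> M) \<and>
     (\<forall>p1\<in>{0..1}. \<forall>p2\<in>{0..1}.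
        V p1 p2 = max (VB l0 l1 \<beta> Rl Rh V Bb p1 p2)
                      (max (VB l0 l1 \<beta> Rl Rh V B1 p1 p2) (VB l0 l1 \<beta> Rl Rh V B2 p1 p2)))"

end

theory Submission
  imports Defs
begin

text \<open>Value iteration preserves separate convexity: each action value is a nonnegative
  combination of values of the previous iterate, taken at beliefs that depend affinely on
  the belief being varied, and a maximum of convex functions is convex. Since the Bellman
  operator is a \<open>\<beta>\<close>-contraction in the sup norm on the unit square, the iterates converge
  pointwise to the bounded solution \<open>V\<close>, and convexity passes to the limit.\<close>

lemma convex_on_max:
  assumes "convex_on S f" "convex_on S g"
  shows "convex_on S (\<lambda>x. max (f x) (g x))"
proof (rule convex_onI)
  fix t :: real and x y
  assume t: "0 < t" "t < 1" and "x \<in> S" "y \<in> S"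
  let ?z = "(1 - t) *\<^sub>R x + t *\<^sub>R y"
  have combination_mono: "(1 - t) * u + t * v \<le> (1 - t) * max (f x) (g x) + t * max (f y) (g y)"
    if "u \<le> max (f x) (g x)" "v \<le> max (f y) (g y)" for u v
    using that t by (intro add_mono mult_left_mono) auto
  show "max (f ?z) (g ?z) \<le> (1 - t) * max (f x) (g x) + t * max (f y) (g y)"
  proof (rule max.boundedI)
    show "f ?z \<le> (1 - t) * max (f x) (g x) + t * max (f y) (g y)"
      using convex_onD[OF assms(1), of t x y] t \<open>x \<in> S\<close> \<open>y \<in> S\<close> combination_mono[of "f x" "f y"]
      by simp
    show "g ?z \<le> (1 - t) * max (f x) (g x) + t * max (f y) (g y)"
      using convex_onD[OF assms(2), of t x y] t \<open>x \<in> S\<close> \<open>y \<in> S\<close> combination_mono[of "g x" "g y"]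
      by simp
  qed
qed (use assms convex_on_imp_convex in blast)

lemma convex_on_affine: "convex S \<Longrightarrow> convex_on S (\<lambda>x::real. a * x + b)"
  by (rule convex_onI) (simp_all add: algebra_simps)

lemma convex_on_compose_affine:
  fixes f :: "real \<Rightarrow> real"
  assumes "convex_on T f" "convex S" "\<And>x. x \<in> S \<Longrightarrow> a * x + b \<in> T"
  shows "convex_on S (\<lambda>x. f (a * x + b))"
proof (rule convex_onI[OF _ assms(2)])
  fix t x y :: real
  assume "0 < t" "t < 1" "x \<in> S" "y \<in> S"
  have "a * ((1 - t) * x + t * y) + b = (1 - t) * (a * x + b) + t * (a * y + b)"
    by (simp add: algebra_simps)
  moreover have "f ((1 - t) * (a * x + b) + t * (a * y + b)) \<le> (1 - t) * f (a * x + b) + t * f (a * y + b)"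
    using convex_onD[OF assms(1), of t "a * x + b" "a * y + b"] \<open>0 < t\<close> \<open>t < 1\<close>
      \<open>x \<in> S\<close> \<open>y \<in> S\<close> assms(3) by simp
  ultimately show "f (a * ((1 - t) *\<^sub>R x + t *\<^sub>R y) + b) \<le> (1 - t) * f (a * x + b) + t * f (a * y + b)"
    by simp
qed

lemma convex_on_LIMSEQ:
  assumes "\<And>n. convex_on S (f n)" "\<And>x. x \<in> S \<Longrightarrow> (\<lambda>n. f n x) \<longlonglongrightarrow> g x" "convex S"
  shows "convex_on S g"
proof (rule convex_onI[OF _ assms(3)])
  fix t :: real and x y
  assume t: "0 < t" "t < 1" and "x \<in> S" "y \<in> S"
  let ?z = "(1 - t) *\<^sub>R x + t *\<^sub>R y"
  have "?z \<in> S"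
    using t \<open>x \<in> S\<close> \<open>y \<in> S\<close> \<open>convex S\<close> by (simp add: convexD)
  show "g ?z \<le> (1 - t) * g x + t * g y"
  proof (rule LIMSEQ_le)
    show "(\<lambda>n. f n ?z) \<longlonglongrightarrow> g ?z"
      using assms(2) \<open>?z \<in> S\<close> .
    show "(\<lambda>n. (1 - t) * f n x + t * f n y) \<longlonglongrightarrow> (1 - t) * g x + t * g y"
      using assms(2) \<open>x \<in> S\<close> \<open>y \<in> S\<close> by (intro tendsto_intros)
    show "\<exists>N. \<forall>n\<ge>N. f n ?z \<le> (1 - t) * f n x + t * f n y"
      using convex_onD[OF assms(1)] t \<open>x \<in> S\<close> \<open>y \<in> S\<close> by simp
  qed
qed

definition separately_convex_on :: "real set \<Rightarrow> (real \<Rightarrow> real \<Rightarrow> real) \<Rightarrow> bool" where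
  "separately_convex_on S W \<longleftrightarrow>
     (\<forall>y\<in>S. convex_on S (\<lambda>x. W x y)) \<and> (\<forall>x\<in>S. convex_on S (\<lambda>y. W x y))"

lemma separately_convex_on_swap:
  "separately_convex_on S W \<Longrightarrow> separately_convex_on S (\<lambda>x y. W y x)"
  by (simp add: separately_convex_on_def)

lemma separately_convex_on_const:
  "convex S \<Longrightarrow> separately_convex_on S (\<lambda>x y. c)"
  by (simp add: separately_convex_on_def convex_on_const)

lemma separately_convex_on_max:
  assumes "separately_convex_on S f" "separately_convex_on S g"
  shows "separately_convex_on S (\<lambda>x y. max (f x y) (g x y))"
  unfolding separately_convex_on_def
proof (intro conjI ballI)
  show "convex_on S (\<lambda>x. max (f x y) (g x y))" if "y \<in> S" for y
    using assms that unfolding separately_convex_on_def by (intro convex_on_max) simp_all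
  show "convex_on S (\<lambda>y. max (f x y) (g x y))" if "x \<in> S" for x
    using assms that unfolding separately_convex_on_def by (intro convex_on_max) simp_all
qed

lemma separately_convex_on_LIMSEQ:
  assumes "\<And>n. separately_convex_on S (f n)" "convex S"
    and "\<And>x y. x \<in> S \<Longrightarrow> y \<in> S \<Longrightarrow> (\<lambda>n. f n x y) \<longlonglongrightarrow> g x y"
  shows "separately_convex_on S g"
  unfolding separately_convex_on_def
proof (intro conjI ballI)
  show "convex_on S (\<lambda>x. g x y)" if "y \<in> S" for y
  proof (rule convex_on_LIMSEQ[OF _ _ assms(2)])
    show "convex_on S (\<lambda>x. f n x y)" for n
      using assms(1) that unfolding separately_convex_on_def by blast
    show "(\<lambda>n. f n x y) \<longlonglongrightarrow> g x y" if "x \<in> S" for x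
      using assms(3) that \<open>y \<in> S\<close> by blast
  qed
  show "convex_on S (\<lambda>y. g x y)" if "x \<in> S" for x
  proof (rule convex_on_LIMSEQ[OF _ _ assms(2)])
    show "convex_on S (\<lambda>y. f n x y)" for n
      using assms(1) that unfolding separately_convex_on_def by blast
    show "(\<lambda>n. f n x y) \<longlonglongrightarrow> g x y" if "y \<in> S" for y
      using assms(3) that \<open>x \<in> S\<close> by blast
  qed
qed

fun mirror_action :: "action \<Rightarrow> action" where
  "mirror_action Bb = Bb"
| "mirror_action B1 = B2"
| "mirror_action B2 = B1"

lemma VB_mirror:
  "VB l0 l1 \<beta> Rl Rh W a p1 p2 = VB l0 l1 \<beta> Rl Rh (\<lambda>x y. W y x) (mirror_action a) p2 p1"
  by (cases a) (simp_all add: algebra_simps)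

lemma VB_add_const:
  "VB l0 l1 \<beta> Rl Rh (\<lambda>x y. W x y + c) a p1 p2 = VB l0 l1 \<beta> Rl Rh W a p1 p2 + \<beta> * c"
  by (cases a) (simp_all add: algebra_simps)

locale discounted_belief_mdp =
  fixes l0 l1 \<beta> Rl Rh :: real
  assumes l0_nonneg: "0 \<le> l0" and l0_le_l1: "l0 \<le> l1" and l1_le_1: "l1 \<le> 1"
    and discount_nonneg: "0 \<le> \<beta>" and discount_less_1: "\<beta> < 1"
begin

definition bellman :: "(real \<Rightarrow> real \<Rightarrow> real) \<Rightarrow> real \<Rightarrow> real \<Rightarrow> real" where
  "bellman W p1 p2 = max (VB l0 l1 \<beta> Rl Rh W Bb p1 p2)
     (max (VB l0 l1 \<beta> Rl Rh W B1 p1 p2) (VB l0 l1 \<beta> Rl Rh W B2 p1 p2))"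

lemma Tupd_unit_interval: "p \<in> {0..1} \<Longrightarrow> Tupd l0 l1 p \<in> {0..1}"
proof -
  assume "p \<in> {0..1}"
  then have "(l1 - l0) * p \<le> l1 - l0"
    using l0_le_l1 by (simp add: mult_left_le)
  then show ?thesis
    using \<open>p \<in> {0..1}\<close> l0_nonneg l0_le_l1 l1_le_1 by (simp add: Tupd_def)
qed

lemma convex_on_VB_first:
  assumes "separately_convex_on {0..1} W" "p2 \<in> {0..1}"
  shows "convex_on {0..1} (\<lambda>p1. VB l0 l1 \<beta> Rl Rh W a p1 p2)"
proof (cases a)
  case Bb
  have "(\<lambda>p1. VB l0 l1 \<beta> Rl Rh W a p1 p2) = (\<lambda>p1.
      (Rl + \<beta> * ((1 - p2) * (W l1 l0 - W l0 l0) + p2 * (W l1 l1 - W l0 l1))) * p1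
      + (p2 * Rl + \<beta> * ((1 - p2) * W l0 l0 + p2 * W l0 l1)))"
    unfolding Bb by (simp add: fun_eq_iff algebra_simps)
  then show ?thesis
    by (simp add: convex_on_affine)
next
  case B1
  have "(\<lambda>p1. VB l0 l1 \<beta> Rl Rh W a p1 p2) = (\<lambda>p1.
      (Rh + \<beta> * (W l1 (Tupd l0 l1 p2) - W l0 (Tupd l0 l1 p2))) * p1 + \<beta> * W l0 (Tupd l0 l1 p2))"
    unfolding B1 by (simp add: fun_eq_iff algebra_simps)
  then show ?thesis
    by (simp add: convex_on_affine)
next
  case B2
  have "convex_on {0..1} (\<lambda>p1. W (Tupd l0 l1 p1) q)" if "q \<in> {0..1}" for q
    using convex_on_compose_affine[of "{0..1}" "\<lambda>x. W x q" "{0..1}" "l1 - l0" l0]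
      assms(1) that Tupd_unit_interval unfolding separately_convex_on_def Tupd_def by auto
  then have "convex_on {0..1} (\<lambda>p1. W (Tupd l0 l1 p1) l0)"
    and "convex_on {0..1} (\<lambda>p1. W (Tupd l0 l1 p1) l1)"
    using l0_nonneg l0_le_l1 l1_le_1 by auto
  then have "convex_on {0..1} (\<lambda>p1. (1 - p2) * W (Tupd l0 l1 p1) l0 + p2 * W (Tupd l0 l1 p1) l1)"
    using assms(2) by (intro convex_on_add convex_on_cmul) auto
  from convex_on_cmul[OF discount_nonneg this]
  have "convex_on {0..1} (\<lambda>p1. p2 * Rh +
      \<beta> * ((1 - p2) * W (Tupd l0 l1 p1) l0 + p2 * W (Tupd l0 l1 p1) l1))"
    by (rule convex_on_add[OF convex_on_const[THEN iffD2], rotated]) simp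
  then show ?thesis
    unfolding B2 by simp
qed

lemma separately_convex_on_VB:
  assumes "separately_convex_on {0..1} W"
  shows "separately_convex_on {0..1} (VB l0 l1 \<beta> Rl Rh W a)"
  unfolding separately_convex_on_def
proof (intro conjI ballI)
  fix p2 :: real
  assume "p2 \<in> {0..1}"
  with assms show "convex_on {0..1} (\<lambda>p1. VB l0 l1 \<beta> Rl Rh W a p1 p2)"
    by (rule convex_on_VB_first)
next
  fix p1 :: real
  assume "p1 \<in> {0..1}"
  with separately_convex_on_swap[OF assms]
  have "convex_on {0..1} (\<lambda>p2. VB l0 l1 \<beta> Rl Rh (\<lambda>x y. W y x) (mirror_action a) p2 p1)"
    by (rule convex_on_VB_first)
  moreover have "(\<lambda>p2. VB l0 l1 \<beta> Rl Rh W a p1 p2)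
      = (\<lambda>p2. VB l0 l1 \<beta> Rl Rh (\<lambda>x y. W y x) (mirror_action a) p2 p1)"
    by (intro ext) (rule VB_mirror)
  ultimately show "convex_on {0..1} (\<lambda>p2. VB l0 l1 \<beta> Rl Rh W a p1 p2)"
    by simp
qed

lemma separately_convex_on_bellman:
  assumes "separately_convex_on {0..1} W"
  shows "separately_convex_on {0..1} (bellman W)"
  unfolding bellman_def
  by (intro separately_convex_on_max separately_convex_on_VB assms)

lemma VB_mono:
  assumes le: "\<And>x y. x \<in> {0..1} \<Longrightarrow> y \<in> {0..1} \<Longrightarrow> W x y \<le> W' x y"
    and p1: "p1 \<in> {0..1}" and p2: "p2 \<in> {0..1}"
  shows "VB l0 l1 \<beta> Rl Rh W a p1 p2 \<le> VB l0 l1 \<beta> Rl Rh W' a p1 p2"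
proof -
  have "l0 \<in> {0..1}" "l1 \<in> {0..1}"
    using l0_nonneg l0_le_l1 l1_le_1 by auto
  moreover have "Tupd l0 l1 p1 \<in> {0..1}" "Tupd l0 l1 p2 \<in> {0..1}"
    using p1 p2 Tupd_unit_interval by auto
  ultimately have W_le: "W x y \<le> W' x y" if "x \<in> {l0, l1, Tupd l0 l1 p1, Tupd l0 l1 p2}"
    "y \<in> {l0, l1, Tupd l0 l1 p1, Tupd l0 l1 p2}" for x y
    using le that by blast
  have weights: "0 \<le> p1" "0 \<le> 1 - p1" "0 \<le> p2" "0 \<le> 1 - p2"
    using p1 p2 by auto
  show ?thesis
  proof (cases a)
    case Bb
    show ?thesis
      unfolding Bb VB.simps
      by (intro add_mono order_refl mult_left_mono mult_nonneg_nonneg W_le discount_nonneg weights) simp_all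
  next
    case B1
    show ?thesis
      unfolding B1 VB.simps
      by (intro add_mono order_refl mult_left_mono W_le discount_nonneg weights) simp_all
  next
    case B2
    show ?thesis
      unfolding B2 VB.simps
      by (intro add_mono order_refl mult_left_mono W_le discount_nonneg weights) simp_all
  qed
qed

lemma bellman_mono:
  "(\<And>x y. x \<in> {0..1} \<Longrightarrow> y \<in> {0..1} \<Longrightarrow> W x y \<le> W' x y) \<Longrightarrow>
    p1 \<in> {0..1} \<Longrightarrow> p2 \<in> {0..1} \<Longrightarrow> bellman W p1 p2 \<le> bellman W' p1 p2"
  unfolding bellman_def by (intro max.mono VB_mono)

lemma bellman_add_const:
  "bellman (\<lambda>x y. W x y + c) p1 p2 = bellman W p1 p2 + \<beta> * c"
  by (simp add: bellman_def VB_add_const max_add_distrib_right)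

lemma bellman_contraction:
  assumes "\<And>x y. x \<in> {0..1} \<Longrightarrow> y \<in> {0..1} \<Longrightarrow> \<bar>W x y - W' x y\<bar> \<le> e"
    and "p1 \<in> {0..1}" "p2 \<in> {0..1}"
  shows "\<bar>bellman W p1 p2 - bellman W' p1 p2\<bar> \<le> \<beta> * e"
proof -
  have upper: "W x y \<le> W' x y + e" and lower: "W' x y \<le> W x y + e"
    if "x \<in> {0..1}" "y \<in> {0..1}" for x y
    using assms(1)[OF that] by linarith+
  have "bellman W p1 p2 \<le> bellman W' p1 p2 + \<beta> * e"
    using bellman_mono[of W "\<lambda>x y. W' x y + e", OF upper assms(2,3)]
    unfolding bellman_add_const .
  moreover have "bellman W' p1 p2 \<le> bellman W p1 p2 + \<beta> * e"
    using bellman_mono[of W' "\<lambda>x y. W x y + e", OF lower assms(2,3)]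
    unfolding bellman_add_const .
  ultimately show ?thesis
    by (simp add: abs_le_iff)
qed

lemma bellman_iterates_error:
  assumes fixed: "\<And>x y. x \<in> {0..1} \<Longrightarrow> y \<in> {0..1} \<Longrightarrow> bellman V x y = V x y"
    and start: "\<And>x y. x \<in> {0..1} \<Longrightarrow> y \<in> {0..1} \<Longrightarrow> \<bar>V x y - W x y\<bar> \<le> M"
    and "p1 \<in> {0..1}" "p2 \<in> {0..1}"
  shows "\<bar>V p1 p2 - (bellman ^^ n) W p1 p2\<bar> \<le> \<beta> ^ n * M"
  using assms(3,4)
proof (induction n arbitrary: p1 p2)
  case 0
  then show ?case using start by simp
next
  case (Suc n)
  have "\<bar>bellman V p1 p2 - bellman ((bellman ^^ n) W) p1 p2\<bar> \<le> \<beta> * (\<beta> ^ n * M)"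
    using bellman_contraction[OF Suc.IH Suc.prems] .
  then show ?case
    using fixed Suc.prems by (simp add: mult.assoc)
qed

lemma bellman_iterates_LIMSEQ:
  assumes "\<And>x y. x \<in> {0..1} \<Longrightarrow> y \<in> {0..1} \<Longrightarrow> bellman V x y = V x y"
    and "\<And>x y. x \<in> {0..1} \<Longrightarrow> y \<in> {0..1} \<Longrightarrow> \<bar>V x y - W x y\<bar> \<le> M"
    and "p1 \<in> {0..1}" "p2 \<in> {0..1}"
  shows "(\<lambda>n. (bellman ^^ n) W p1 p2) \<longlonglongrightarrow> V p1 p2"
proof (rule Lim_transform[OF tendsto_const], rule Lim_null_comparison)
  show "\<forall>\<^sub>F n in sequentially. norm ((bellman ^^ n) W p1 p2 - V p1 p2) \<le> \<beta> ^ n * M"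
    using bellman_iterates_error[OF assms] by (simp add: abs_minus_commute)
  show "(\<lambda>n. \<beta> ^ n * M) \<longlonglongrightarrow> 0"
    using discount_nonneg discount_less_1 by (intro tendsto_mult_left_zero LIMSEQ_power_zero) simp
qed

lemma optimal_value_separately_convex:
  assumes "is_optimal_value l0 l1 \<beta> Rl Rh V"
  shows "separately_convex_on {0..1} V"
proof (rule separately_convex_on_LIMSEQ)
  obtain M where "\<forall>x\<in>{0..1}. \<forall>y\<in>{0..1}. \<bar>V x y\<bar> \<le> M"
    using assms unfolding is_optimal_value_def by blast
  moreover have "\<forall>x\<in>{0..1}. \<forall>y\<in>{0..1}. bellman V x y = V x y"
    using assms unfolding is_optimal_value_def bellman_def by simp
  ultimately show "(\<lambda>n. (bellman ^^ n) (\<lambda>_ _. 0) x y) \<longlonglongrightarrow> V x y"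
    if "x \<in> {0..1}" "y \<in> {0..1}" for x y
    using bellman_iterates_LIMSEQ[of V "\<lambda>_ _. 0" M x y] that by simp
  show "separately_convex_on {0..1} ((bellman ^^ n) (\<lambda>_ _. 0))" for n
    by (induction n) (simp_all add: separately_convex_on_const separately_convex_on_bellman)
qed simp

end

theorem lemma2:
  fixes l0 l1 \<beta> Rl Rh :: real and V :: "real \<Rightarrow> real \<Rightarrow> real"
  assumes "0 \<le> l0" and "l0 \<le> l1" and "l1 \<le> 1"
    and "0 \<le> \<beta>" and "\<beta> < 1"
    and "0 < Rl" and "Rl < Rh" and "Rh < 2 * Rl"
    and "is_optimal_value l0 l1 \<beta> Rl Rh V"
  shows "\<forall>a. (\<forall>p2\<in>{0..1}. convex_on {0..1} (\<lambda>p1. VB l0 l1 \<beta> Rl Rh V a p1 p2)) \<and>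
             (\<forall>p1\<in>{0..1}. convex_on {0..1} (\<lambda>p2. VB l0 l1 \<beta> Rl Rh V a p1 p2))"
proof -
  interpret discounted_belief_mdp l0 l1 \<beta> Rl Rh
    using assms by unfold_locales
  have "separately_convex_on {0..1} (VB l0 l1 \<beta> Rl Rh V a)" for a
    using separately_convex_on_VB optimal_value_separately_convex assms(9) by blast
  then show ?thesis
    by (simp add: separately_convex_on_def)
qed

end
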